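(* Let $N\ge1$ and $0\le m\le r\le n$. Every $L\in\mathcal L^N_{r,m}$ can be written uniquely as $L=\sum_{|J|\le r}p_J\,K_J$ with $p_J\in\mathcal P^N_{r-m}$, and every such sum lies in $\mathcal L^N_{r,m}$; i.e. $\mathcal L^N_{r,m}=\mathcal P^N_{r-m}\otimes\mathcal L^N_{r,r}$. Consequently $$\dim\mathcal L^N_{r,m}=\binom{N+r-m}{r-m}\binom{N+r}{r}.$$
   Context: Variables $x=(x_1,\dots,x_N)$; for a multi-index $I=(i_1,\dots,i_N)\in\mathbb N^N$, $|I|=i_1+\dots+i_N$, $x^I=x_1^{i_1}\cdots x_N^{i_N}$, $D_I=\partial^{|I|}/\partial x_1^{i_1}\cdots\partial x_N^{i_N}$. $\mathcal P^N_s$ is the span of the monomials $x^I$ with $|I|\le s$ (and $\{0\}$ for $s<0$). Euler operator $E=\sum_{i=1}^N x_i\partial/\partial x_i$; Pochhammer operator $(a-E)_k=(-1)^k(E-a)(E-(a-1))\cdots(E-(a-k+1))$. For $|J|\le r$, $K_J=(n-|J|-E)_{r-|J|}D_J$. $\mathcal L^N_{r,m}$ is the real vector space of linear differential operators $\sum_{|I|\le r}a_I(x)D_I$ with polynomial coefficients (order at most $r$) mapping $\mathcal P^N_n$ into $\mathcal P^N_{n-m}$. *)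

theory Defs
  imports Complex_Main "HOL-Library.Poly_Mapping" "HOL-Library.Function_Algebras"
begin

text \<open>Multi-indices I in N^N are finitely supported maps nat =>0 nat whose Poly_Mapping.keys lie in
  {..<N}; a real polynomial is a finitely supported map from exponent vectors to real
  coefficients (monomial x^K has exponent vector K).\<close>

type_synonym mindex = "nat \<Rightarrow>\<^sub>0 nat"
type_synonym mpoly = "mindex \<Rightarrow>\<^sub>0 real"

definition mdeg :: "mindex \<Rightarrow> nat" where
  "mdeg I = (\<Sum>i\<in>Poly_Mapping.keys I. Poly_Mapping.lookup I i)"

definition MI :: "nat \<Rightarrow> nat \<Rightarrow> mindex set" where
  "MI N r = {I. Poly_Mapping.keys I \<subseteq> {..<N} \<and> mdeg I \<le> r}"

text \<open>polynomials in x_1..x_N (variables indexed 0..N-1)\<close>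
definition polys :: "nat \<Rightarrow> mpoly set" where
  "polys N = {p. \<forall>K\<in>Poly_Mapping.keys p. Poly_Mapping.keys K \<subseteq> {..<N}}"

definition Pspace :: "nat \<Rightarrow> nat \<Rightarrow> mpoly set" where
  "Pspace N s = {p. \<forall>K\<in>Poly_Mapping.keys p. Poly_Mapping.keys K \<subseteq> {..<N} \<and> mdeg K \<le> s}"

definition xmon :: "mindex \<Rightarrow> mpoly" where
  "xmon K = Poly_Mapping.single K 1"

definition cpoly :: "real \<Rightarrow> mpoly" where
  "cpoly c = Poly_Mapping.single 0 c"

definition pd :: "nat \<Rightarrow> mpoly \<Rightarrow> mpoly" where
  "pd i p = (\<Sum>K\<in>Poly_Mapping.keys p. cpoly (Poly_Mapping.lookup p K * real (Poly_Mapping.lookup K i))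
                           * xmon (K - Poly_Mapping.single i 1))"

definition Dop :: "nat \<Rightarrow> mindex \<Rightarrow> mpoly \<Rightarrow> mpoly" where
  "Dop N I p = foldr (\<lambda>i q. (pd i ^^ Poly_Mapping.lookup I i) q) [0..<N] p"

definition euler :: "nat \<Rightarrow> mpoly \<Rightarrow> mpoly" where
  "euler N p = (\<Sum>i<N. xmon (Poly_Mapping.single i 1) * pd i p)"

text \<open>Pochhammer operator (a-E)_k = (-1)^k (E-a)(E-(a-1))...(E-(a-k+1))
  = (a-E)(a-1-E)...(a-k+1-E)  (the factors commute)\<close>
primrec pochE :: "nat \<Rightarrow> real \<Rightarrow> nat \<Rightarrow> mpoly \<Rightarrow> mpoly" where
  "pochE N a 0 p = p"
| "pochE N a (Suc k) p =
     cpoly (a - real k) * pochE N a k p - euler N (pochE N a k p)"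

definition Kop :: "nat \<Rightarrow> nat \<Rightarrow> nat \<Rightarrow> mindex \<Rightarrow> mpoly \<Rightarrow> mpoly" where
  "Kop N n r J p = pochE N (real n - real (mdeg J)) (r - mdeg J) (Dop N J p)"

definition diffop :: "nat \<Rightarrow> nat \<Rightarrow> (mindex \<Rightarrow> mpoly) \<Rightarrow> mpoly \<Rightarrow> mpoly" where
  "diffop N r a p = (\<Sum>I\<in>MI N r. a I * Dop N I p)"

text \<open>L^N_{r,m}: linear differential operators of order at most r with polynomial
  coefficients (in x_1..x_N) mapping P^N_n into P^N_{n-m}; operators are identified
  with the maps they induce on polynomials.\<close>
definition Lspace :: "nat \<Rightarrow> nat \<Rightarrow> nat \<Rightarrow> nat \<Rightarrow> (mpoly \<Rightarrow> mpoly) set" where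
  "Lspace N n r m = {L. (\<exists>a. (\<forall>I. a I \<in> polys N) \<and> L = diffop N r a)
                        \<and> (\<forall>p\<in>Pspace N n. L p \<in> Pspace N (n - m))}"

definition op_scale :: "real \<Rightarrow> (mpoly \<Rightarrow> mpoly) \<Rightarrow> (mpoly \<Rightarrow> mpoly)" where
  "op_scale c L = (\<lambda>p. cpoly c * L p)"

end

theory Submission
  imports Defs
begin

text \<open>
  On monomials, D_I x^K is a multi-index falling factorial times x^(K-I), and E x^K = |K| x^K.
  Hence K_J x^K = c(K,J) x^(K-J), where c(K,J) vanishes unless J <= K componentwise, and
  c(J,J) = (n-|J|)(n-|J|-1)...(n-r+1) is nonzero because |J| <= r <= n. A family of operators
  acting on monomials in this triangular way is a basis of the differential operators of order
  at most r over the polynomials: the coefficients are determined by, and can be solved for from,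
  the values on the monomials x^K with |K| <= r, by induction on |K|.

  For |K| <= n the coefficient c(K,J) also vanishes unless |K| - |J| <= n - r, so coefficients of
  degree at most r - m give operators mapping P_n into P_(n-m). Conversely, if some p_J contains a
  monomial x^M of degree greater than r - m, take such a J with (|J|, J_0) lexicographically
  maximal and apply the operator to x^K, K = J + (n-r) e_0. Every other J' with c(K,J') nonzero
  lies above J in that order, so p_J' has degree at most r - m and does not contribute to the
  coefficient of x^(M + (n-r) e_0) in the image. That coefficient is therefore c(K,J) times the
  coefficient of x^M in p_J, although the monomial has degree greater than n - m. Thus the
  operators x^M K_J with |M| <= r - m and |J| <= r form a basis, and counting multi-indices gives
  the dimension.
\<close>

abbreviation lookup :: "('a \<Rightarrow>\<^sub>0 'b::zero) \<Rightarrow> 'a \<Rightarrow> 'b" where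
  "lookup \<equiv> Poly_Mapping.lookup"

abbreviation keys :: "('a \<Rightarrow>\<^sub>0 'b::zero) \<Rightarrow> 'a set" where
  "keys \<equiv> Poly_Mapping.keys"

section \<open>Monomials and multi-indices\<close>

lemma lookup_cpoly_mult [simp]: "lookup (cpoly c * f) X = c * lookup f X"
  by (simp add: cpoly_def mult_map_scale_conv_mult[symmetric] Poly_Mapping.map.rep_eq when_def)

lemma cpoly_0 [simp]: "cpoly 0 = 0"
  by (simp add: cpoly_def)

lemma cpoly_1 [simp]: "cpoly 1 = 1"
  by (simp add: cpoly_def)

lemma cpoly_eq_0_iff [simp]: "cpoly c = 0 \<longleftrightarrow> c = 0"
  by (metis cpoly_def lookup_single_eq lookup_zero single_zero)

lemma cpoly_add: "cpoly (a + b) = cpoly a + cpoly b"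
  by (simp add: cpoly_def single_add)

lemma cpoly_diff: "cpoly (a - b) = cpoly a - cpoly b"
  by (simp add: cpoly_def single_diff)

lemma cpoly_mult: "cpoly (a * b) = cpoly a * cpoly b"
  by (simp add: cpoly_def mult_single)

lemma cpoly_sum: "cpoly (\<Sum>x\<in>A. f x) = (\<Sum>x\<in>A. cpoly (f x))"
  by (induction A rule: infinite_finite_induct) (simp_all add: cpoly_add)

lemma cpoly_mult_cpoly_mult: "cpoly a * (cpoly b * p) = cpoly (a * b) * p"
  by (simp add: cpoly_mult mult.assoc)

lemma xmon_0 [simp]: "xmon 0 = 1"
  by (simp add: xmon_def)

lemma xmon_add: "xmon (A + B) = xmon A * xmon B"
  by (simp add: xmon_def mult_single)

lemma lookup_xmon: "lookup (xmon K) X = (if X = K then 1 else 0)"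
  by (simp add: xmon_def lookup_single when_def)

lemma lookup_cpoly_mult_xmon: "lookup (cpoly c * xmon K) X = (if X = K then c else 0)"
  by (simp add: lookup_xmon)

lemma keys_xmon [simp]: "keys (xmon K) = {K}"
  by (simp add: xmon_def)

lemma xmon_inject [simp]: "xmon A = xmon B \<longleftrightarrow> A = B"
  by (metis keys_xmon singleton_inject)

lemma xmon_neq_0 [simp]: "xmon A \<noteq> 0"
  by (metis keys_xmon keys_zero empty_not_insert)

lemma mpoly_expansion:
  assumes "finite A" "keys f \<subseteq> A"
  shows "f = (\<Sum>K\<in>A. cpoly (lookup f K) * xmon K)"
proof (rule poly_mapping_eqI)
  fix X
  have "lookup (\<Sum>K\<in>A. cpoly (lookup f K) * xmon K) X = (\<Sum>K\<in>A. if K = X then lookup f K else 0)"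
    by (simp add: lookup_sum lookup_cpoly_mult_xmon eq_commute del: lookup_cpoly_mult)
  also have "\<dots> = lookup f X"
    using assms by (auto simp: in_keys_iff)
  finally show "lookup f X = lookup (\<Sum>K\<in>A. cpoly (lookup f K) * xmon K) X" ..
qed

lemma lookup_sum_cpoly_xmon:
  assumes "finite A" "M \<in> A"
  shows "lookup (\<Sum>K\<in>A. cpoly (c K) * xmon K) M = c M"
  using assms by (simp add: lookup_sum lookup_cpoly_mult_xmon eq_commute del: lookup_cpoly_mult)

(* Componentwise; the library's linear order on poly_mapping is lexicographic. *)
definition mindex_le :: "mindex \<Rightarrow> mindex \<Rightarrow> bool" where
  "mindex_le A B \<longleftrightarrow> (\<forall>i. lookup A i \<le> lookup B i)"

lemma mindex_le_refl [simp]: "mindex_le A A"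
  by (simp add: mindex_le_def)

lemma mindex_le_add [simp]: "mindex_le A (A + B)"
  by (simp add: mindex_le_def lookup_add)

lemma mindex_le_diff_add: "mindex_le A B \<Longrightarrow> B - A + A = B"
  by (rule poly_mapping_eqI) (simp add: mindex_le_def lookup_add lookup_minus)

lemma keys_diff_subset: "keys (A - (B::mindex)) \<subseteq> keys A"
  by (auto simp: in_keys_iff lookup_minus)

lemma lookup_mult_xmon:
  "lookup (f * xmon M) X = (if mindex_le M X then lookup f (X - M) else 0)"
proof -
  have "f * xmon M = (\<Sum>K\<in>keys f. cpoly (lookup f K) * xmon K) * xmon M"
    by (rule arg_cong[of _ _ "\<lambda>g. g * xmon M"]) (rule mpoly_expansion; simp)
  also have "\<dots> = (\<Sum>K\<in>keys f. cpoly (lookup f K) * xmon (K + M))"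
    by (simp add: sum_distrib_right mult.assoc xmon_add)
  finally have "lookup (f * xmon M) X = (\<Sum>K\<in>keys f. if X = K + M then lookup f K else 0)"
    by (simp add: lookup_sum lookup_cpoly_mult_xmon del: lookup_cpoly_mult)
  also have "\<dots> = (if mindex_le M X then lookup f (X - M) else 0)"
  proof (cases "mindex_le M X")
    case True
    have "X = K + M \<longleftrightarrow> K = X - M" for K
      using mindex_le_diff_add[OF True] by auto
    then show ?thesis using True by (simp add: in_keys_iff)
  next
    case False
    have "X \<noteq> K + M" for K
      using False mindex_le_add[of M K] by (auto simp: add.commute)
    then show ?thesis using False by simp
  qed
  finally show ?thesis .
qed

lemma mdeg_eq_sum:
  assumes "finite S" "keys K \<subseteq> S"
  shows "mdeg K = (\<Sum>i\<in>S. lookup K i)"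
  unfolding mdeg_def using assms by (intro sum.mono_neutral_left) (auto simp: in_keys_iff)

lemma mdeg_0 [simp]: "mdeg 0 = 0"
  by (simp add: mdeg_def)

lemma mdeg_eq_0_iff: "mdeg K = 0 \<longleftrightarrow> K = 0"
  by (auto simp: mdeg_def poly_mapping_eq_iff fun_eq_iff in_keys_iff)

lemma mdeg_add: "mdeg (A + B) = mdeg A + mdeg B"
proof -
  let ?S = "keys A \<union> keys B"
  have "keys (A + B) \<subseteq> ?S"
    by (rule keys_add)
  then show ?thesis
    by (simp add: mdeg_eq_sum[of ?S] lookup_add sum.distrib)
qed

lemma mdeg_single [simp]: "mdeg (Poly_Mapping.single i k) = k"
  by (simp add: mdeg_def)

lemma mdeg_split: "mindex_le B A \<Longrightarrow> mdeg A = mdeg (A - B) + mdeg B"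
  using mdeg_add[of "A - B" B] by (simp add: mindex_le_diff_add)

lemma mdeg_mono: "mindex_le B A \<Longrightarrow> mdeg B \<le> mdeg A"
  by (simp add: mdeg_split)

lemma mdeg_strict_mono:
  assumes "mindex_le B A" "B \<noteq> A"
  shows "mdeg B < mdeg A"
proof -
  have "A - B \<noteq> 0"
    using assms mindex_le_diff_add[of B A] by auto
  then show ?thesis
    using mdeg_split[OF assms(1)] mdeg_eq_0_iff[of "A - B"] by simp
qed

lemma lookup_le_mdeg: "lookup K i \<le> mdeg K"
  by (cases "i \<in> keys K") (auto simp: mdeg_def in_keys_iff intro: member_le_sum)

section \<open>Linear operators on polynomials\<close>

interpretation mpoly: vector_space "\<lambda>c (p::mpoly). cpoly c * p"
  by unfold_locales (simp_all add: cpoly_add cpoly_mult algebra_simps)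

interpretation mpoly_ops: vector_space_pair "\<lambda>c (p::mpoly). cpoly c * p" "\<lambda>c (p::mpoly). cpoly c * p" ..

abbreviation mlinear :: "(mpoly \<Rightarrow> mpoly) \<Rightarrow> bool" where
  "mlinear \<equiv> Vector_Spaces.linear (\<lambda>c p. cpoly c * p) (\<lambda>c p. cpoly c * p)"

lemma mlinearI:
  assumes "\<And>p q. T (p + q) = T p + T q" "\<And>c p. T (cpoly c * p) = cpoly c * T p"
  shows "mlinear T"
  using assms by (simp add: Vector_Spaces.linear_iff mpoly.vector_space_axioms)

lemma mlinear_ident: "mlinear (\<lambda>p. p)"
  using mpoly.linear_id by (simp add: id_def)

lemma mlinear_compose: "mlinear T \<Longrightarrow> mlinear U \<Longrightarrow> mlinear (\<lambda>p. T (U p))"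
  using Vector_Spaces.linear_compose[of _ _ U _ T] by (simp add: comp_def)

lemma mlinear_mult_left: "mlinear T \<Longrightarrow> mlinear (\<lambda>p. f * T p)"
  by (intro mlinearI) (simp_all add: mpoly_ops.linear_add mpoly_ops.linear_scale distrib_left mult.left_commute)

lemma mlinear_mult_right: "mlinear (\<lambda>p. p * g)"
  by (intro mlinearI) (simp_all add: distrib_right mult.assoc)

lemma mlinear_funpow: "mlinear T \<Longrightarrow> mlinear (T ^^ k)"
  by (induction k) (simp_all add: mpoly.linear_id Vector_Spaces.linear_compose)

lemma mlinear_expansion:
  assumes "mlinear T"
  shows "T p = (\<Sum>K\<in>keys p. cpoly (lookup p K) * T (xmon K))"
proof -
  have "T p = T (\<Sum>K\<in>keys p. cpoly (lookup p K) * xmon K)"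
    by (rule arg_cong[of _ _ T]) (rule mpoly_expansion; simp)
  also have "\<dots> = (\<Sum>K\<in>keys p. cpoly (lookup p K) * T (xmon K))"
    by (simp add: mpoly_ops.linear_sum[OF assms] mpoly_ops.linear_scale[OF assms])
  finally show ?thesis .
qed

lemma mlinear_eqI:
  assumes "mlinear T" "mlinear U" "\<And>K. T (xmon K) = U (xmon K)"
  shows "T = U"
proof
  fix p
  show "T p = U p"
    by (simp only: mlinear_expansion[OF assms(1), of p] mlinear_expansion[OF assms(2), of p] assms(3))
qed

section \<open>Counting multi-indices; polynomial spaces\<close>

lemma MI_mono: "s \<le> t \<Longrightarrow> MI N s \<subseteq> MI N t"
  by (auto simp: MI_def)

lemma MI_add: "A \<in> MI N a \<Longrightarrow> B \<in> MI N b \<Longrightarrow> A + B \<in> MI N (a + b)"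
  using keys_add[of A B] by (auto simp: MI_def mdeg_add)

lemma mdeg_diff_le: "mdeg (A - B) \<le> mdeg A"
proof -
  have "mdeg (A - B) = (\<Sum>i\<in>keys A. lookup (A - B) i)"
    by (rule mdeg_eq_sum) (simp_all add: keys_diff_subset)
  also have "\<dots> \<le> (\<Sum>i\<in>keys A. lookup A i)"
    by (rule sum_mono) (simp add: lookup_minus)
  finally show ?thesis
    by (simp add: mdeg_def)
qed

lemma MI_diff: "A \<in> MI N a \<Longrightarrow> A - B \<in> MI N a"
  using keys_diff_subset[of A B] mdeg_diff_le[of A B] by (auto simp: MI_def)

lemma sum_list_map_lookup: "keys I \<subseteq> {..<N} \<Longrightarrow> sum_list (map (lookup I) [0..<N]) = mdeg I"
  by (simp add: mdeg_eq_sum[of "{..<N}"] sum_set_upt_conv_sum_list_nat[symmetric] atLeast0LessThan)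

lemma map_lookup_nth: "map (lookup (Poly_Mapping.nth l)) [0..<length l] = l"
  by (rule nth_equalityI) (simp_all add: nth_default_nth)

lemma keys_nth_subset: "keys (Poly_Mapping.nth l) \<subseteq> {..<length l}"
  by (auto simp: in_set_enumerate_eq)

lemma nth_map_lookup:
  assumes "keys I \<subseteq> {..<N}"
  shows "Poly_Mapping.nth (map (lookup I) [0..<N]) = I"
proof (rule poly_mapping_eqI)
  fix k
  show "lookup (Poly_Mapping.nth (map (lookup I) [0..<N])) k = lookup I k"
  proof (cases "k < N")
    case False
    then have "k \<notin> keys I"
      using assms by (meson lessThan_iff subsetD)
    then show ?thesis
      using False by (simp add: nth_default_beyond in_keys_iff)
  qed (simp add: nth_default_nth)
qed

lemma lists_of_MI: "bij_betw (\<lambda>I. map (lookup I) [0..<N]) (MI N s) {l. length l = N \<and> sum_list l \<le> s}"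
proof (rule bij_betw_byWitness[where f' = Poly_Mapping.nth])
  show "\<forall>I\<in>MI N s. Poly_Mapping.nth (map (lookup I) [0..<N]) = I"
    by (simp add: MI_def nth_map_lookup)
  show "\<forall>l\<in>{l. length l = N \<and> sum_list l \<le> s}. map (lookup (Poly_Mapping.nth l)) [0..<N] = l"
    using map_lookup_nth by blast
  show "(\<lambda>I. map (lookup I) [0..<N]) ` MI N s \<subseteq> {l. length l = N \<and> sum_list l \<le> s}"
    by (auto simp: MI_def sum_list_map_lookup)
  show "Poly_Mapping.nth ` {l. length l = N \<and> sum_list l \<le> s} \<subseteq> MI N s"
  proof
    fix I
    assume "I \<in> Poly_Mapping.nth ` {l. length l = N \<and> sum_list l \<le> s}"
    then obtain l where l: "length l = N" "sum_list l \<le> s" and I: "I = Poly_Mapping.nth l"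
      by blast
    have "mdeg I = sum_list l"
      using sum_list_map_lookup[OF keys_nth_subset[of l]] map_lookup_nth[of l] I by simp
    then show "I \<in> MI N s"
      using keys_nth_subset[of l] l I by (simp add: MI_def)
  qed
qed

lemma sum_list_tl_le: "sum_list (tl l) \<le> (sum_list l :: nat)"
  by (cases l) auto

lemma card_lists_sum_le: "card {l::nat list. length l = N \<and> sum_list l \<le> s} = (N + s) choose s"
proof -
  have "(s - sum_list (tl l)) # tl l = l" if "length l = Suc N" "sum_list l = s" for l
    using that by (cases l) auto
  then have "bij_betw (\<lambda>l. (s - sum_list l) # l) {l. length l = N \<and> sum_list l \<le> s}
      {l. length l = Suc N \<and> sum_list l = s}"
    by (intro bij_betw_byWitness[where f' = tl]) (auto simp: sum_list_tl_le)
  then have "card {l::nat list. length l = N \<and> sum_list l \<le> s} = card {l::nat list. length l = Suc N \<and> sum_list l = s}"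
    by (rule bij_betw_same_card)
  also have "\<dots> = (N + s) choose s"
    by (simp add: card_length_sum_list add.commute)
  finally show ?thesis .
qed

lemma card_MI: "card (MI N s) = (N + s) choose s"
  using bij_betw_same_card[OF lists_of_MI] card_lists_sum_le by simp

lemma finite_MI: "finite (MI N s)"
  by (rule card_ge_0_finite) (simp add: card_MI)

lemma Pspace_eq: "Pspace N s = {p. keys p \<subseteq> MI N s}"
  by (auto simp: Pspace_def MI_def)

lemma keys_cpoly_mult: "keys (cpoly c * p) \<subseteq> keys p"
  by (auto simp: in_keys_iff)

lemma subspace_Pspace: "mpoly.subspace (Pspace N s)"
proof (unfold mpoly.subspace_def, intro conjI ballI allI)
  show "0 \<in> Pspace N s"
    by (simp add: Pspace_eq)
  fix p q
  assume "p \<in> Pspace N s" "q \<in> Pspace N s"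
  then show "p + q \<in> Pspace N s"
    using keys_add[of p q] by (auto simp: Pspace_eq)
next
  fix c p
  assume "p \<in> Pspace N s"
  then show "cpoly c * p \<in> Pspace N s"
    using keys_cpoly_mult[of c p] by (auto simp: Pspace_eq)
qed

lemma subspace_polys: "mpoly.subspace (polys N)"
proof (unfold mpoly.subspace_def, intro conjI ballI allI)
  show "0 \<in> polys N"
    by (simp add: polys_def)
  fix p q
  assume "p \<in> polys N" "q \<in> polys N"
  then show "p + q \<in> polys N"
    using keys_add[of p q] by (auto simp: polys_def)
next
  fix c p
  assume "p \<in> polys N"
  then show "cpoly c * p \<in> polys N"
    using keys_cpoly_mult[of c p] by (auto simp: polys_def)
qed

lemma xmon_in_Pspace_iff [simp]: "xmon K \<in> Pspace N s \<longleftrightarrow> K \<in> MI N s"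
  by (simp add: Pspace_eq)

lemma xmon_in_polys: "keys K \<subseteq> {..<N} \<Longrightarrow> xmon K \<in> polys N"
  by (simp add: polys_def)

lemma cpoly_in_polys: "cpoly c \<in> polys N"
  by (simp add: polys_def cpoly_def)

lemma Pspace_subset_polys: "Pspace N s \<subseteq> polys N"
  by (auto simp: Pspace_def polys_def)

lemma Pspace_mult:
  assumes "p \<in> Pspace N a" "q \<in> Pspace N b"
  shows "p * q \<in> Pspace N (a + b)"
  unfolding Pspace_eq mem_Collect_eq
proof
  fix X
  assume "X \<in> keys (p * q)"
  then obtain A B where "X = A + B" "A \<in> keys p" "B \<in> keys q"
    using keys_mult[of p q] by blast
  then show "X \<in> MI N (a + b)"
    using assms by (auto simp: Pspace_eq intro!: MI_add)
qed

lemma polys_mult: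
  assumes "p \<in> polys N" "q \<in> polys N"
  shows "p * q \<in> polys N"
  unfolding polys_def mem_Collect_eq
proof
  fix X
  assume "X \<in> keys (p * q)"
  then obtain A B where "X = A + B" "A \<in> keys p" "B \<in> keys q"
    using keys_mult[of p q] by blast
  then show "keys X \<subseteq> {..<N}"
    using assms keys_add[of A B] unfolding polys_def by blast
qed

section \<open>The operators \<open>D\<^sub>I\<close>, \<open>E\<close>, \<open>(a - E)\<^sub>k\<close> and \<open>K\<^sub>J\<close> on monomials\<close>

definition falling_fact :: "nat \<Rightarrow> nat \<Rightarrow> real" where
  "falling_fact a k = (\<Prod>j<k. real a - real j)"

lemma falling_fact_0 [simp]: "falling_fact a 0 = 1"
  by (simp add: falling_fact_def)

lemma falling_fact_Suc: "falling_fact a (Suc k) = falling_fact a k * (real a - real k)"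
  by (simp add: falling_fact_def)

lemma falling_fact_eq_0_iff: "falling_fact a k = 0 \<longleftrightarrow> a < k"
  by (auto simp: falling_fact_def intro: bexI[of _ a])

definition mfalling_fact :: "mindex \<Rightarrow> mindex \<Rightarrow> real" where
  "mfalling_fact K I = (\<Prod>i\<in>keys I. falling_fact (lookup K i) (lookup I i))"

lemma mfalling_fact_eq_prod:
  assumes "finite S" "keys I \<subseteq> S"
  shows "mfalling_fact K I = (\<Prod>i\<in>S. falling_fact (lookup K i) (lookup I i))"
  unfolding mfalling_fact_def using assms
  by (intro prod.mono_neutral_left) (auto simp: in_keys_iff)

lemma mfalling_fact_eq_0_iff: "mfalling_fact K I = 0 \<longleftrightarrow> \<not> mindex_le I K"
proof -
  have "mfalling_fact K I = 0 \<longleftrightarrow> (\<exists>i\<in>keys I. lookup K i < lookup I i)"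
    by (simp add: mfalling_fact_def falling_fact_eq_0_iff)
  also have "\<dots> \<longleftrightarrow> \<not> mindex_le I K"
    by (auto simp: mindex_le_def in_keys_iff not_le)
  finally show ?thesis .
qed

lemma mfalling_fact_add_single:
  "mfalling_fact K (I + Poly_Mapping.single i 1) = mfalling_fact K I * (real (lookup K i) - real (lookup I i))"
proof -
  let ?S = "insert i (keys I)"
  have keys_sub: "keys (I + Poly_Mapping.single i 1) \<subseteq> ?S"
    using keys_add[of I "Poly_Mapping.single i 1"] by auto
  have "mfalling_fact K (I + Poly_Mapping.single i 1)
      = falling_fact (lookup K i) (Suc (lookup I i)) * (\<Prod>j\<in>keys I - {i}. falling_fact (lookup K j) (lookup I j))"
    by (subst mfalling_fact_eq_prod[OF _ keys_sub]) (simp_all add: prod.insert_remove lookup_add lookup_single)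
  also have "\<dots> = mfalling_fact K I * (real (lookup K i) - real (lookup I i))"
    by (simp add: mfalling_fact_eq_prod[of ?S] subset_insertI prod.insert_remove falling_fact_Suc)
  finally show ?thesis .
qed

lemma pd_eq_sum:
  assumes "finite A" "keys p \<subseteq> A"
  shows "pd i p = (\<Sum>K\<in>A. cpoly (lookup p K * real (lookup K i)) * xmon (K - Poly_Mapping.single i 1))"
  unfolding pd_def using assms
  by (intro sum.mono_neutral_left) (auto simp: in_keys_iff)

lemma mlinear_pd: "mlinear (pd i)"
proof (rule mlinearI)
  fix p q :: mpoly
  let ?A = "keys p \<union> keys q"
  have "pd i (p + q) = (\<Sum>K\<in>?A. cpoly ((lookup p K + lookup q K) * real (lookup K i)) * xmon (K - Poly_Mapping.single i 1))"
    using keys_add[of p q] by (simp add: pd_eq_sum[of ?A] lookup_add)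
  also have "\<dots> = pd i p + pd i q"
    by (simp add: pd_eq_sum[of ?A] distrib_right cpoly_add sum.distrib)
  finally show "pd i (p + q) = pd i p + pd i q" .
next
  fix c and p :: mpoly
  have "pd i (cpoly c * p) = (\<Sum>K\<in>keys p. cpoly (c * (lookup p K * real (lookup K i))) * xmon (K - Poly_Mapping.single i 1))"
    using keys_cpoly_mult[of c p] by (simp add: pd_eq_sum[of "keys p"] mult.assoc)
  also have "\<dots> = cpoly c * pd i p"
    by (simp add: pd_def sum_distrib_left cpoly_mult_cpoly_mult)
  finally show "pd i (cpoly c * p) = cpoly c * pd i p" .
qed

lemma pd_xmon: "pd i (xmon K) = cpoly (real (lookup K i)) * xmon (K - Poly_Mapping.single i 1)"
  by (simp add: pd_def lookup_xmon)

lemma pd_funpow_xmon: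
  "(pd i ^^ k) (xmon K) = cpoly (falling_fact (lookup K i) k) * xmon (K - Poly_Mapping.single i k)"
proof (induction k)
  case (Suc k)
  have "K - Poly_Mapping.single i k - Poly_Mapping.single i 1 = K - Poly_Mapping.single i (Suc k)"
    by (rule poly_mapping_eqI) (simp add: lookup_minus lookup_single when_def)
  moreover have "falling_fact (lookup K i) k * real (lookup K i - k) = falling_fact (lookup K i) (Suc k)"
    by (cases "k \<le> lookup K i") (simp_all add: falling_fact_Suc falling_fact_eq_0_iff)
  ultimately show ?case
    using Suc by (simp add: mpoly_ops.linear_scale[OF mlinear_pd] pd_xmon lookup_minus cpoly_mult_cpoly_mult)
qed simp

lemma pd_mult_xmon_xmon: "pd i (xmon A * xmon B) = pd i (xmon A) * xmon B + xmon A * pd i (xmon B)"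
proof -
  let ?e = "Poly_Mapping.single i (1::nat)"
  have A_part: "cpoly (real (lookup A i)) * xmon (A + B - ?e) = cpoly (real (lookup A i)) * xmon (A - ?e + B)"
  proof (cases "lookup A i = 0")
    case False
    then have "A + B - ?e = A - ?e + B"
      by (intro poly_mapping_eqI) (auto simp: lookup_add lookup_minus lookup_single when_def)
    then show ?thesis by simp
  qed simp
  have B_part: "cpoly (real (lookup B i)) * xmon (A + B - ?e) = cpoly (real (lookup B i)) * xmon (A + (B - ?e))"
  proof (cases "lookup B i = 0")
    case False
    then have "A + B - ?e = A + (B - ?e)"
      by (intro poly_mapping_eqI) (auto simp: lookup_add lookup_minus lookup_single when_def)
    then show ?thesis by simp
  qed simp
  have "pd i (xmon A * xmon B)
      = cpoly (real (lookup A i)) * xmon (A + B - ?e) + cpoly (real (lookup B i)) * xmon (A + B - ?e)"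
    by (simp add: xmon_add[symmetric] pd_xmon lookup_add cpoly_add distrib_right)
  also have "\<dots> = pd i (xmon A) * xmon B + xmon A * pd i (xmon B)"
    unfolding A_part B_part by (simp add: pd_xmon xmon_add mult_ac)
  finally show ?thesis .
qed

lemma pd_mult: "pd i (f * g) = pd i f * g + f * pd i g"
proof -
  have lin_right: "mlinear (\<lambda>g. pd i (f * g) - (pd i f * g + f * pd i g))" for f
    by (intro mpoly_ops.linear_compose_sub mpoly_ops.linear_compose_add mlinear_compose[OF mlinear_pd]
        mlinear_mult_left mlinear_pd mlinear_ident)
  have lin_left: "mlinear (\<lambda>f. pd i (f * g) - (pd i f * g + f * pd i g))" for g
    by (intro mpoly_ops.linear_compose_sub mpoly_ops.linear_compose_add mlinear_compose[OF mlinear_pd]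
        mlinear_compose[OF mlinear_mult_right] mlinear_mult_right mlinear_pd)
  have "pd i (xmon A * g) = pd i (xmon A) * g + xmon A * pd i g" for A g
    using mlinear_eqI[OF lin_right mpoly_ops.linear_zero] pd_mult_xmon_xmon[of i A]
    by (simp add: fun_eq_iff)
  then show ?thesis
    using mlinear_eqI[OF lin_left mpoly_ops.linear_zero] by (simp add: fun_eq_iff)
qed

lemma mlinear_Dop: "mlinear (Dop N I)"
proof -
  have "mlinear (foldr (\<lambda>i. pd i ^^ lookup I i) xs)" for xs
  proof (induction xs)
    case (Cons i xs)
    then show ?case
      by (simp add: mlinear_compose mlinear_funpow mlinear_pd)
  qed (simp add: mlinear_ident)
  then show ?thesis
    unfolding Dop_def[abs_def] .
qed

lemma foldr_pd_funpow_xmon: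
  assumes "distinct xs"
  shows "foldr (\<lambda>i q. (pd i ^^ lookup I i) q) xs (xmon K) =
    cpoly (\<Prod>i\<in>set xs. falling_fact (lookup K i) (lookup I i))
      * xmon (K - (\<Sum>i\<in>set xs. Poly_Mapping.single i (lookup I i)))"
  using assms
proof (induction xs)
  case (Cons x xs)
  let ?K = "K - (\<Sum>i\<in>set xs. Poly_Mapping.single i (lookup I i))"
  have "lookup ?K x = lookup K x"
    using Cons.prems by (simp add: lookup_minus lookup_sum lookup_single when_def)
  moreover have "?K - Poly_Mapping.single x (lookup I x) = K - (\<Sum>i\<in>set (x # xs). Poly_Mapping.single i (lookup I i))"
    using Cons.prems by (intro poly_mapping_eqI) (simp add: lookup_minus lookup_add lookup_sum)
  ultimately show ?case
    using Cons by (simp add: mpoly_ops.linear_scale[OF mlinear_funpow[OF mlinear_pd]] pd_funpow_xmon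
        cpoly_mult_cpoly_mult mult.commute)
qed simp

lemma sum_single_lookup:
  fixes I :: mindex
  assumes "keys I \<subseteq> {..<N}"
  shows "(\<Sum>i<N. Poly_Mapping.single i (lookup I i)) = I"
proof (rule poly_mapping_eqI)
  fix k
  have "lookup (\<Sum>i<N. Poly_Mapping.single i (lookup I i)) k = (\<Sum>i<N. if i = k then lookup I i else 0)"
    by (simp add: lookup_sum lookup_single when_def)
  also have "\<dots> = (if k < N then lookup I k else 0)"
    using sum.delta[OF finite_lessThan[of N], of k "lookup I"] by simp
  also have "\<dots> = lookup I k"
    using assms by (auto simp: in_keys_iff)
  finally show "lookup (\<Sum>i<N. Poly_Mapping.single i (lookup I i)) k = lookup I k" .
qed

lemma Dop_xmon:
  assumes "keys I \<subseteq> {..<N}"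
  shows "Dop N I (xmon K) = cpoly (mfalling_fact K I) * xmon (K - I)"
  using foldr_pd_funpow_xmon[of "[0..<N]" I K] assms
  by (simp add: Dop_def atLeast0LessThan sum_single_lookup mfalling_fact_eq_prod[of "{..<N}"])

lemma pd_Dop:
  assumes "i < N" "keys I \<subseteq> {..<N}"
  shows "pd i (Dop N I p) = Dop N (I + Poly_Mapping.single i 1) p"
proof -
  let ?I' = "I + Poly_Mapping.single i 1"
  have keys_I': "keys ?I' \<subseteq> {..<N}"
    using assms keys_add[of I "Poly_Mapping.single i 1"] by auto
  have "pd i (Dop N I (xmon K)) = Dop N ?I' (xmon K)" for K
  proof -
    have mon_eq: "K - I - Poly_Mapping.single i 1 = K - ?I'"
      by (intro poly_mapping_eqI) (simp add: lookup_add lookup_minus)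
    moreover have coeff_eq: "mfalling_fact K I * real (lookup K i - lookup I i) = mfalling_fact K ?I'"
    proof (cases "lookup I i \<le> lookup K i")
      case True
      then show ?thesis
        unfolding mfalling_fact_add_single by simp
    next
      case False
      then have "\<not> mindex_le ?I' K"
        by (auto simp: mindex_le_def lookup_add intro!: exI[of _ i])
      then show ?thesis
        using False by (simp add: mfalling_fact_eq_0_iff)
    qed
    have "pd i (Dop N I (xmon K))
        = cpoly (mfalling_fact K I * real (lookup K i - lookup I i)) * xmon (K - I - Poly_Mapping.single i 1)"
      by (simp add: Dop_xmon assms(2) mpoly_ops.linear_scale[OF mlinear_pd] pd_xmon lookup_minus
          cpoly_mult_cpoly_mult)
    then show ?thesis
      unfolding coeff_eq mon_eq Dop_xmon[OF keys_I'] .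
  qed
  then have "(\<lambda>p. pd i (Dop N I p)) = Dop N ?I'"
    by (rule mlinear_eqI[OF mlinear_compose[OF mlinear_pd mlinear_Dop] mlinear_Dop])
  then show ?thesis
    by (rule fun_cong)
qed

lemma mlinear_euler: "mlinear (euler N)"
  unfolding euler_def[abs_def]
  by (intro mpoly_ops.linear_compose_sum ballI mlinear_mult_left mlinear_pd)

lemma euler_xmon:
  assumes "keys K \<subseteq> {..<N}"
  shows "euler N (xmon K) = cpoly (real (mdeg K)) * xmon K"
proof -
  have term_i: "xmon (Poly_Mapping.single i 1) * pd i (xmon K) = cpoly (real (lookup K i)) * xmon K" for i
  proof (cases "lookup K i = 0")
    case False
    then have "Poly_Mapping.single i 1 + (K - Poly_Mapping.single i 1) = K"
      by (intro poly_mapping_eqI) (auto simp: lookup_add lookup_minus lookup_single when_def)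
    then show ?thesis
      by (metis pd_xmon mult.left_commute xmon_add)
  qed (simp add: pd_xmon)
  have "euler N (xmon K) = cpoly (\<Sum>i<N. real (lookup K i)) * xmon K"
    unfolding euler_def term_i by (simp add: cpoly_sum sum_distrib_right)
  then show ?thesis
    using assms by (simp add: mdeg_eq_sum[of "{..<N}"])
qed

lemma mlinear_pochE: "mlinear (pochE N a k)"
proof (induction k)
  case 0
  then show ?case
    using mlinear_ident by (simp add: pochE.simps(1)[abs_def])
next
  case (Suc k)
  then show ?case
    unfolding pochE.simps(2)[abs_def]
    by (intro mpoly_ops.linear_compose_sub mlinear_mult_left mlinear_compose[OF mlinear_euler])
qed

lemma pochE_xmon:
  assumes "keys K \<subseteq> {..<N}"
  shows "pochE N a k (xmon K) = cpoly (\<Prod>j<k. a - real j - real (mdeg K)) * xmon K"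
proof (induction k)
  case (Suc k)
  let ?c = "\<Prod>j<k. a - real j - real (mdeg K)"
  have "pochE N a (Suc k) (xmon K) = cpoly ((a - real k) * ?c - ?c * real (mdeg K)) * xmon K"
    using Suc by (simp add: mpoly_ops.linear_scale[OF mlinear_euler] euler_xmon[OF assms]
        cpoly_mult_cpoly_mult cpoly_diff left_diff_distrib)
  then show ?case
    by (simp add: algebra_simps)
qed simp

(* On x^(K-J) the Euler operator acts as |K| - |J|, which turns the Pochhammer factor
   (n - |J| - E)_(r-|J|) of K_J into a product in n - |K|. *)
definition Kcoeff :: "nat \<Rightarrow> nat \<Rightarrow> mindex \<Rightarrow> mindex \<Rightarrow> real" where
  "Kcoeff n r K J = mfalling_fact K J * (\<Prod>j<r - mdeg J. real n - real (mdeg K) - real j)"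

lemma mlinear_Kop: "mlinear (Kop N n r J)"
  unfolding Kop_def[abs_def] by (rule mlinear_compose[OF mlinear_pochE mlinear_Dop])

lemma Kop_xmon:
  assumes "keys J \<subseteq> {..<N}" "keys K \<subseteq> {..<N}"
  shows "Kop N n r J (xmon K) = cpoly (Kcoeff n r K J) * xmon (K - J)"
proof (cases "mindex_le J K")
  case True
  have keys_diff: "keys (K - J) \<subseteq> {..<N}"
    using assms(2) keys_diff_subset[of K J] by blast
  have "(\<Prod>j<r - mdeg J. real n - real (mdeg J) - real j - real (mdeg (K - J)))
      = (\<Prod>j<r - mdeg J. real n - real (mdeg K) - real j)"
    using mdeg_split[OF True] by (intro prod.cong) simp_all
  then show ?thesis
    by (simp add: Kop_def Dop_xmon[OF assms(1)] pochE_xmon[OF keys_diff] Kcoeff_def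
        mpoly_ops.linear_scale[OF mlinear_pochE] cpoly_mult_cpoly_mult)
next
  case False
  then have "mfalling_fact K J = 0"
    by (simp add: mfalling_fact_eq_0_iff)
  then show ?thesis
    using assms by (simp add: Kop_def Dop_xmon Kcoeff_def mpoly_ops.linear_0[OF mlinear_pochE])
qed

lemma Kcoeff_neq_0_iff:
  "Kcoeff n r K J \<noteq> 0 \<longleftrightarrow> mindex_le J K \<and> (mdeg K \<le> n \<longrightarrow> mdeg K + r \<le> n + mdeg J)"
proof -
  have factor_eq_0: "real n - real (mdeg K) - real j = 0 \<longleftrightarrow> n = mdeg K + j" for j
  proof -
    have "real n - real (mdeg K) - real j = real n - real (mdeg K + j)"
      by simp
    then show ?thesis
      by (simp only: right_minus_eq of_nat_eq_iff)
  qed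
  have "(\<Prod>j<r - mdeg J. real n - real (mdeg K) - real j) = 0
      \<longleftrightarrow> (\<exists>j\<in>{..<r - mdeg J}. real n - real (mdeg K) - real j = 0)"
    by (rule prod_zero_iff) simp
  also have "\<dots> \<longleftrightarrow> (\<exists>j<r - mdeg J. n = mdeg K + j)"
    unfolding factor_eq_0 by auto
  also have "\<dots> \<longleftrightarrow> mdeg K \<le> n \<and> n - mdeg K < r - mdeg J"
    by (auto intro!: exI[of _ "n - mdeg K"])
  finally show ?thesis
    by (auto simp: Kcoeff_def mfalling_fact_eq_0_iff)
qed

section \<open>Triangular families of operators\<close>

definition op_comb :: "nat \<Rightarrow> nat \<Rightarrow> (mindex \<Rightarrow> mpoly \<Rightarrow> mpoly) \<Rightarrow> (mindex \<Rightarrow> mpoly) \<Rightarrow> mpoly \<Rightarrow> mpoly" where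
  "op_comb N s T p = (\<lambda>q. \<Sum>J\<in>MI N s. p J * T J q)"

lemma mlinear_op_comb: "(\<And>J. mlinear (T J)) \<Longrightarrow> mlinear (op_comb N s T p)"
  unfolding op_comb_def by (intro mpoly_ops.linear_compose_sum ballI mlinear_mult_left)

locale triangular_family =
  fixes N s :: nat and T :: "mindex \<Rightarrow> mpoly \<Rightarrow> mpoly" and c :: "mindex \<Rightarrow> mindex \<Rightarrow> real"
  assumes T_xmon: "J \<in> MI N s \<Longrightarrow> keys K \<subseteq> {..<N} \<Longrightarrow> T J (xmon K) = cpoly (c K J) * xmon (K - J)"
    and coeff_lower: "J \<in> MI N s \<Longrightarrow> c K J \<noteq> 0 \<Longrightarrow> mindex_le J K"
    and coeff_diag: "J \<in> MI N s \<Longrightarrow> c J J \<noteq> 0"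
begin

lemma op_comb_xmon:
  assumes "keys K \<subseteq> {..<N}"
  shows "op_comb N s T p (xmon K) = (\<Sum>J\<in>MI N s. cpoly (c K J) * (p J * xmon (K - J)))"
  unfolding op_comb_def using assms by (intro sum.cong) (simp_all add: T_xmon mult.left_commute)

lemma op_comb_xmon_cong:
  assumes "keys K \<subseteq> {..<N}" "\<And>J. J \<in> MI N s \<Longrightarrow> mindex_le J K \<Longrightarrow> p J = p' J"
  shows "op_comb N s T p (xmon K) = op_comb N s T p' (xmon K)"
proof -
  have "cpoly (c K J) * (p J * xmon (K - J)) = cpoly (c K J) * (p' J * xmon (K - J))" if "J \<in> MI N s" for J
  proof (cases "c K J = 0")
    case False
    then show ?thesis
      using that assms(2) coeff_lower by simp
  qed simp
  then show ?thesis
    unfolding op_comb_xmon[OF assms(1)] by (rule sum.cong[OF refl])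
qed

lemma op_comb_xmon_diag:
  assumes "K \<in> MI N s"
  shows "op_comb N s T p (xmon K) = cpoly (c K K) * p K + op_comb N s T (p(K := 0)) (xmon K)"
proof -
  have keys_K: "keys K \<subseteq> {..<N}"
    using assms by (simp add: MI_def)
  have "op_comb N s T q (xmon K) = cpoly (c K K) * q K + (\<Sum>J\<in>MI N s - {K}. cpoly (c K J) * (q J * xmon (K - J)))"
    for q
    by (simp add: op_comb_xmon[OF keys_K] sum.remove[OF finite_MI assms])
  from this[of p] this[of "p(K := 0)"] show ?thesis
    by simp
qed

lemma coeffs_unique:
  assumes "\<And>K. K \<in> MI N s \<Longrightarrow> op_comb N s T p (xmon K) = op_comb N s T p' (xmon K)"
  shows "J \<in> MI N s \<Longrightarrow> p J = p' J"
proof (induction "mdeg J" arbitrary: J rule: less_induct)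
  case less
  have keys_J: "keys J \<subseteq> {..<N}"
    using less.prems by (simp add: MI_def)
  have "(p(J := 0)) J' = (p'(J := 0)) J'" if "J' \<in> MI N s" "mindex_le J' J" for J'
  proof (cases "J' = J")
    case False
    then show ?thesis
      using less.hyps[OF mdeg_strict_mono[OF that(2) False] that(1)] by simp
  qed simp
  then have "op_comb N s T (p(J := 0)) (xmon J) = op_comb N s T (p'(J := 0)) (xmon J)"
    by (rule op_comb_xmon_cong[OF keys_J])
  then have "cpoly (c J J) * p J = cpoly (c J J) * p' J"
    using assms[OF less.prems] op_comb_xmon_diag[OF less.prems, of p] op_comb_xmon_diag[OF less.prems, of p']
    by simp
  then show "p J = p' J"
    using coeff_diag[OF less.prems] by simp
qed

lemma op_comb_xmon_in_polys:
  assumes "keys K \<subseteq> {..<N}" "\<And>J. p J \<in> polys N"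
  shows "op_comb N s T p (xmon K) \<in> polys N"
  unfolding op_comb_xmon[OF assms(1)]
  using assms keys_diff_subset[of K]
  by (intro mpoly.subspace_sum[OF subspace_polys] mpoly.subspace_scale[OF subspace_polys]
      polys_mult xmon_in_polys) auto

lemma coeffs_extend:
  assumes f: "\<And>K. K \<in> MI N s \<Longrightarrow> f K \<in> polys N"
    and p: "\<forall>J. p J \<in> polys N" "\<forall>J. J \<notin> MI N s \<or> d \<le> mdeg J \<longrightarrow> p J = 0"
      "\<forall>K\<in>MI N s. mdeg K < d \<longrightarrow> op_comb N s T p (xmon K) = f K"
  shows "\<exists>p'. (\<forall>J. p' J \<in> polys N) \<and> (\<forall>J. J \<notin> MI N s \<or> Suc d \<le> mdeg J \<longrightarrow> p' J = 0)
    \<and> (\<forall>K\<in>MI N s. mdeg K < Suc d \<longrightarrow> op_comb N s T p' (xmon K) = f K)"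
proof (intro exI conjI allI ballI impI)
  define p' where "p' J = (if J \<in> MI N s \<and> mdeg J = d
      then cpoly (1 / c J J) * (f J - op_comb N s T p (xmon J)) else p J)" for J
  show "p' J \<in> polys N" for J
    using f p(1) op_comb_xmon_in_polys[of J p]
    by (auto simp: p'_def MI_def intro!: mpoly.subspace_scale[OF subspace_polys] mpoly.subspace_diff[OF subspace_polys])
  show "J \<notin> MI N s \<or> Suc d \<le> mdeg J \<Longrightarrow> p' J = 0" for J
    using p(2) by (auto simp: p'_def)
  fix K
  assume K: "K \<in> MI N s" "mdeg K < Suc d"
  then have keys_K: "keys K \<subseteq> {..<N}"
    by (simp add: MI_def)
  show "op_comb N s T p' (xmon K) = f K"
  proof (cases "mdeg K = d")
    case True
    have "op_comb N s T (p'(K := 0)) (xmon K) = op_comb N s T p (xmon K)"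
      using p(2) True by (intro op_comb_xmon_cong[OF keys_K]) (fastforce simp: p'_def dest: mdeg_strict_mono)
    then show ?thesis
      using K True coeff_diag[OF K(1)]
      by (simp add: op_comb_xmon_diag[OF K(1), of p'] p'_def cpoly_mult_cpoly_mult)
  next
    case False
    have "op_comb N s T p' (xmon K) = op_comb N s T p (xmon K)"
      using K False mdeg_mono by (intro op_comb_xmon_cong[OF keys_K]) (fastforce simp: p'_def)
    then show ?thesis
      using p(3) K False by simp
  qed
qed

lemma coeffs_exist:
  assumes "\<And>K. K \<in> MI N s \<Longrightarrow> f K \<in> polys N"
  shows "\<exists>p. (\<forall>J. p J \<in> polys N) \<and> (\<forall>J. J \<notin> MI N s \<longrightarrow> p J = 0)
    \<and> (\<forall>K\<in>MI N s. op_comb N s T p (xmon K) = f K)"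
proof -
  have "\<exists>p. (\<forall>J. p J \<in> polys N) \<and> (\<forall>J. J \<notin> MI N s \<or> d \<le> mdeg J \<longrightarrow> p J = 0)
    \<and> (\<forall>K\<in>MI N s. mdeg K < d \<longrightarrow> op_comb N s T p (xmon K) = f K)" for d
  proof (induction d)
    case 0
    show ?case
      by (rule exI[of _ "\<lambda>J. 0"]) (simp add: mpoly.subspace_0[OF subspace_polys])
  next
    case (Suc d)
    then obtain p where p: "\<forall>J. p J \<in> polys N" "\<forall>J. J \<notin> MI N s \<or> d \<le> mdeg J \<longrightarrow> p J = 0"
      "\<forall>K\<in>MI N s. mdeg K < d \<longrightarrow> op_comb N s T p (xmon K) = f K"
      by blast
    then show ?case
      using coeffs_extend[of f p d] assms by blast
  qed
  from this[of "Suc s"] show ?thesis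
    by (auto simp: MI_def)
qed

end

lemma triangular_family_Dop: "triangular_family N s (Dop N) mfalling_fact"
  by unfold_locales (simp_all add: Dop_xmon MI_def mfalling_fact_eq_0_iff)

lemma triangular_family_Kop: "r \<le> n \<Longrightarrow> triangular_family N r (Kop N n r) (Kcoeff n r)"
  by unfold_locales (auto simp: Kop_xmon MI_def Kcoeff_neq_0_iff)

section \<open>Differential operators of bounded order\<close>

definition is_diffop :: "nat \<Rightarrow> nat \<Rightarrow> (mpoly \<Rightarrow> mpoly) \<Rightarrow> bool" where
  "is_diffop N s T \<longleftrightarrow> (\<exists>a. (\<forall>I. a I \<in> polys N) \<and> T = diffop N s a)"

lemma is_diffopI: "(\<And>I. a I \<in> polys N) \<Longrightarrow> T = diffop N s a \<Longrightarrow> is_diffop N s T"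
  unfolding is_diffop_def by blast

lemma diffop_eq_op_comb: "diffop N s a = op_comb N s (Dop N) a"
  by (simp add: diffop_def[abs_def] op_comb_def)

lemma is_diffop_eqI:
  assumes "is_diffop N s T" "is_diffop N s U" "\<And>K. K \<in> MI N s \<Longrightarrow> T (xmon K) = U (xmon K)"
  shows "T = U"
proof -
  obtain a b where T: "T = diffop N s a" and U: "U = diffop N s b"
    using assms(1,2) by (auto simp: is_diffop_def)
  interpret D: triangular_family N s "Dop N" mfalling_fact
    by (rule triangular_family_Dop)
  have "a I = b I" if "I \<in> MI N s" for I
    using D.coeffs_unique[of a b] assms(3) that by (simp add: T U diffop_eq_op_comb)
  then show ?thesis
    unfolding T U diffop_def by (intro ext sum.cong) simp_all
qed

lemma is_diffop_single:
  assumes "J \<in> MI N s" "f \<in> polys N"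
  shows "is_diffop N s (\<lambda>q. f * Dop N J q)"
proof (rule is_diffopI)
  let ?a = "\<lambda>I. if I = J then f else 0"
  show "?a I \<in> polys N" for I
    using assms(2) mpoly.subspace_0[OF subspace_polys] by simp
  have "diffop N s ?a q = f * Dop N J q" for q
  proof -
    have "diffop N s ?a q = (\<Sum>I\<in>MI N s. if I = J then f * Dop N J q else 0)"
      unfolding diffop_def by (rule sum.cong) auto
    also have "\<dots> = f * Dop N J q"
      using assms(1) finite_MI[of N s] by simp
    finally show ?thesis .
  qed
  then show "(\<lambda>q. f * Dop N J q) = diffop N s ?a"
    by (simp add: fun_eq_iff)
qed

lemma is_diffop_add:
  assumes "is_diffop N s T" "is_diffop N s U"
  shows "is_diffop N s (\<lambda>q. T q + U q)"
proof -
  obtain a b where "\<forall>I. a I \<in> polys N" "T = diffop N s a" "\<forall>I. b I \<in> polys N" "U = diffop N s b"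
    using assms unfolding is_diffop_def by blast
  then show ?thesis
    by (intro is_diffopI[where a = "\<lambda>I. a I + b I"] mpoly.subspace_add[OF subspace_polys])
      (simp_all add: diffop_def[abs_def] distrib_right sum.distrib)
qed

lemma is_diffop_diff:
  assumes "is_diffop N s T" "is_diffop N s U"
  shows "is_diffop N s (\<lambda>q. T q - U q)"
proof -
  obtain a b where "\<forall>I. a I \<in> polys N" "T = diffop N s a" "\<forall>I. b I \<in> polys N" "U = diffop N s b"
    using assms unfolding is_diffop_def by blast
  then show ?thesis
    by (intro is_diffopI[where a = "\<lambda>I. a I - b I"] mpoly.subspace_diff[OF subspace_polys])
      (simp_all add: diffop_def[abs_def] left_diff_distrib sum_subtractf)
qed

lemma is_diffop_mult_left:
  assumes "is_diffop N s T" "f \<in> polys N"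
  shows "is_diffop N s (\<lambda>q. f * T q)"
proof -
  obtain a where "\<forall>I. a I \<in> polys N" "T = diffop N s a"
    using assms(1) unfolding is_diffop_def by blast
  then show ?thesis
    using assms(2) by (intro is_diffopI[where a = "\<lambda>I. f * a I"] polys_mult)
      (simp_all add: diffop_def[abs_def] sum_distrib_left mult.assoc)
qed

lemma is_diffop_sum:
  "(\<And>x. x \<in> A \<Longrightarrow> is_diffop N s (T x)) \<Longrightarrow> is_diffop N s (\<lambda>q. \<Sum>x\<in>A. T x q)"
proof (induction A rule: infinite_finite_induct)
  case (insert x F)
  then have "is_diffop N s (\<lambda>q. T x q + (\<Sum>x\<in>F. T x q))"
    by (intro is_diffop_add) auto
  then show ?case
    using insert.hyps by simp
qed (auto intro!: is_diffopI[where a = "\<lambda>I. 0"] mpoly.subspace_0[OF subspace_polys] simp: diffop_def[abs_def])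

lemma is_diffop_mono:
  assumes "is_diffop N s T" "s \<le> t"
  shows "is_diffop N t T"
proof -
  obtain a where a: "\<forall>I. a I \<in> polys N" "T = (\<lambda>q. \<Sum>I\<in>MI N s. a I * Dop N I q)"
    using assms(1) by (auto simp: is_diffop_def diffop_def[abs_def])
  have "is_diffop N t (\<lambda>q. \<Sum>I\<in>MI N s. a I * Dop N I q)"
    using a(1) MI_mono[OF assms(2)] by (intro is_diffop_sum is_diffop_single) auto
  then show ?thesis
    using a(2) by simp
qed

lemma polys_pd: "p \<in> polys N \<Longrightarrow> pd i p \<in> polys N"
  unfolding pd_def using keys_diff_subset
  by (intro mpoly.subspace_sum[OF subspace_polys] mpoly.subspace_scale[OF subspace_polys] xmon_in_polys)
    (fastforce simp: polys_def)

lemma polys_Dop: "q \<in> polys N \<Longrightarrow> Dop N I q \<in> polys N"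
proof -
  have "q \<in> polys N \<Longrightarrow> foldr (\<lambda>i q. (pd i ^^ lookup I i) q) xs q \<in> polys N" for xs
  proof (induction xs)
    case (Cons i xs)
    have "(pd i ^^ k) p \<in> polys N" if "p \<in> polys N" for k p
      using that by (induction k) (simp_all add: polys_pd)
    then show ?case
      using Cons by simp
  qed simp
  then show "q \<in> polys N \<Longrightarrow> Dop N I q \<in> polys N"
    by (simp add: Dop_def)
qed

lemma polys_euler: "p \<in> polys N \<Longrightarrow> euler N p \<in> polys N"
  unfolding euler_def
  by (intro mpoly.subspace_sum[OF subspace_polys] polys_mult polys_pd xmon_in_polys) auto

lemma is_diffop_in_polys: "is_diffop N s T \<Longrightarrow> q \<in> polys N \<Longrightarrow> T q \<in> polys N"
  unfolding is_diffop_def diffop_def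
  by (auto intro!: mpoly.subspace_sum[OF subspace_polys] polys_mult polys_Dop)

lemma euler_mult:
  "euler N (f * g) = euler N f * g + (\<Sum>i<N. (xmon (Poly_Mapping.single i 1) * f) * pd i g)"
  by (simp add: euler_def pd_mult distrib_left sum.distrib sum_distrib_right mult.assoc)

lemma is_diffop_euler:
  assumes "is_diffop N s T"
  shows "is_diffop N (Suc s) (\<lambda>q. euler N (T q))"
proof -
  let ?e = "\<lambda>i. Poly_Mapping.single i (1::nat)"
  obtain a where a: "\<forall>I. a I \<in> polys N" "T = (\<lambda>q. \<Sum>I\<in>MI N s. a I * Dop N I q)"
    using assms by (auto simp: is_diffop_def diffop_def[abs_def])
  have euler_T: "euler N (T q) = (\<Sum>I\<in>MI N s. euler N (a I) * Dop N I q +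
      (\<Sum>i<N. (xmon (?e i) * a I) * Dop N (I + ?e i) q))" for q
    unfolding a(2) mpoly_ops.linear_sum[OF mlinear_euler]
    by (intro sum.cong refl) (simp add: euler_mult pd_Dop MI_def)
  have raised: "I + ?e i \<in> MI N (Suc s)" if "I \<in> MI N s" "i < N" for I i
    using MI_add[OF that(1), of "?e i" 1] that(2) by (simp add: MI_def)
  have "is_diffop N (Suc s) (\<lambda>q. \<Sum>I\<in>MI N s. euler N (a I) * Dop N I q +
      (\<Sum>i<N. (xmon (?e i) * a I) * Dop N (I + ?e i) q))"
    using a(1) raised MI_mono[of s "Suc s" N]
    by (intro is_diffop_sum is_diffop_add is_diffop_single polys_euler polys_mult xmon_in_polys) auto
  then show ?thesis
    by (simp only: euler_T)
qed

lemma is_diffop_pochE_Dop: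
  assumes "keys J \<subseteq> {..<N}"
  shows "is_diffop N (mdeg J + k) (\<lambda>q. pochE N a k (Dop N J q))"
proof (induction k)
  case 0
  have "is_diffop N (mdeg J) (\<lambda>q. 1 * Dop N J q)"
    using assms by (intro is_diffop_single) (simp_all add: MI_def polys_def)
  then show ?case
    by simp
next
  case (Suc k)
  have "is_diffop N (mdeg J + Suc k)
      (\<lambda>q. cpoly (a - real k) * pochE N a k (Dop N J q) - euler N (pochE N a k (Dop N J q)))"
    using is_diffop_euler[OF Suc]
    by (intro is_diffop_diff is_diffop_mono[OF is_diffop_mult_left[OF Suc cpoly_in_polys]]) simp_all
  then show ?case
    by simp
qed

lemma is_diffop_Kop: "J \<in> MI N r \<Longrightarrow> is_diffop N r (Kop N n r J)"
  using is_diffop_pochE_Dop[of J N "r - mdeg J" "real n - real (mdeg J)"]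
  by (simp add: MI_def Kop_def[abs_def])

lemma is_diffop_op_comb_Kop:
  "(\<And>J. J \<in> MI N r \<Longrightarrow> p J \<in> polys N) \<Longrightarrow> is_diffop N r (op_comb N r (Kop N n r) p)"
  unfolding op_comb_def by (intro is_diffop_sum is_diffop_mult_left is_diffop_Kop)

lemma Kop_expansion_exists:
  assumes "r \<le> n" "is_diffop N r L"
  shows "\<exists>p. (\<forall>J. p J \<in> polys N) \<and> (\<forall>J. J \<notin> MI N r \<longrightarrow> p J = 0) \<and> L = op_comb N r (Kop N n r) p"
proof -
  interpret K: triangular_family N r "Kop N n r" "Kcoeff n r"
    using assms(1) by (rule triangular_family_Kop)
  have "L (xmon K) \<in> polys N" if "K \<in> MI N r" for K
    using that by (intro is_diffop_in_polys[OF assms(2)] xmon_in_polys) (simp add: MI_def)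
  then obtain p where p: "\<forall>J. p J \<in> polys N" "\<forall>J. J \<notin> MI N r \<longrightarrow> p J = 0"
    "\<forall>K\<in>MI N r. op_comb N r (Kop N n r) p (xmon K) = L (xmon K)"
    using K.coeffs_exist[of "\<lambda>K. L (xmon K)"] by blast
  have "op_comb N r (Kop N n r) p = L"
    using p(1,3) by (intro is_diffop_eqI[OF is_diffop_op_comb_Kop assms(2)]) simp_all
  then show ?thesis
    using p(1,2) by blast
qed

lemma Kop_expansion_unique:
  assumes "r \<le> n" "op_comb N r (Kop N n r) p = op_comb N r (Kop N n r) p'" "J \<in> MI N r"
  shows "p J = p' J"
proof -
  interpret K: triangular_family N r "Kop N n r" "Kcoeff n r"
    using assms(1) by (rule triangular_family_Kop)
  show ?thesis
    using K.coeffs_unique[of p p'] assms(2,3) by simp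
qed

lemma Kop_expansion_inj:
  assumes "r \<le> n" "\<forall>J. J \<notin> MI N r \<longrightarrow> p J = 0" "\<forall>J. J \<notin> MI N r \<longrightarrow> p' J = 0"
    and "op_comb N r (Kop N n r) p = op_comb N r (Kop N n r) p'"
  shows "p = p'"
proof
  fix J
  show "p J = p' J"
    using Kop_expansion_unique[OF assms(1,4)] assms(2,3) by (cases "J \<in> MI N r") simp_all
qed

section \<open>Degrees of the coefficients\<close>

lemma lookup_mult_xmon_eq_0:
  assumes "p \<in> Pspace N d" "d + mdeg A < mdeg X"
  shows "lookup (p * xmon A) X = 0"
proof (cases "mindex_le A X")
  case True
  have "X - A \<notin> MI N d"
    using assms(2) mdeg_split[OF True] by (simp add: MI_def)
  then show ?thesis
    using assms(1) True by (auto simp: lookup_mult_xmon Pspace_eq in_keys_iff)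
qed (simp add: lookup_mult_xmon)

lemma op_comb_Kop_xmon_in_Pspace:
  assumes "m \<le> r" "r \<le> n" "\<And>J. J \<in> MI N r \<Longrightarrow> p J \<in> Pspace N (r - m)" "K \<in> MI N n"
  shows "op_comb N r (Kop N n r) p (xmon K) \<in> Pspace N (n - m)"
proof -
  interpret K: triangular_family N r "Kop N n r" "Kcoeff n r"
    using assms(2) by (rule triangular_family_Kop)
  have "cpoly (Kcoeff n r K J) * (p J * xmon (K - J)) \<in> Pspace N (n - m)" if J: "J \<in> MI N r" for J
  proof (cases "Kcoeff n r K J = 0")
    case False
    then have "mindex_le J K" "mdeg K + r \<le> n + mdeg J"
      using assms(4) by (auto simp: Kcoeff_neq_0_iff MI_def)
    then have "K - J \<in> MI N (n - r)"
      using assms(4) MI_diff[of K N n J] mdeg_split[of J K] by (simp add: MI_def)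
    then have "p J * xmon (K - J) \<in> Pspace N (r - m + (n - r))"
      by (intro Pspace_mult assms(3) J) simp
    then show ?thesis
      using assms(1,2) by (intro mpoly.subspace_scale[OF subspace_Pspace]) simp
  qed (simp add: mpoly.subspace_0[OF subspace_Pspace])
  moreover have keys_K: "keys K \<subseteq> {..<N}"
    using assms(4) by (simp add: MI_def)
  ultimately show ?thesis
    unfolding K.op_comb_xmon[OF keys_K] by (intro mpoly.subspace_sum[OF subspace_Pspace])
qed

lemma op_comb_Kop_maps_Pspace:
  assumes "m \<le> r" "r \<le> n" "\<And>J. J \<in> MI N r \<Longrightarrow> p J \<in> Pspace N (r - m)" "q \<in> Pspace N n"
  shows "op_comb N r (Kop N n r) p q \<in> Pspace N (n - m)"
proof -
  have lin: "mlinear (op_comb N r (Kop N n r) p)"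
    by (rule mlinear_op_comb[OF mlinear_Kop])
  show ?thesis
    unfolding mlinear_expansion[OF lin, of q]
  proof (intro mpoly.subspace_sum[OF subspace_Pspace] mpoly.subspace_scale[OF subspace_Pspace])
    fix K
    assume "K \<in> keys q"
    then have K: "K \<in> MI N n"
      using assms(4) by (auto simp: Pspace_eq)
    show "op_comb N r (Kop N n r) p (xmon K) \<in> Pspace N (n - m)"
      using assms(1-3) K by (rule op_comb_Kop_xmon_in_Pspace)
  qed
qed

lemma Kcoeff_shift_neq_0_above:
  assumes "r \<le> n" "mdeg J \<le> r" "Kcoeff n r (J + Poly_Mapping.single 0 (n - r)) J' \<noteq> 0" "J' \<noteq> J"
  shows "mdeg J < mdeg J' \<or> mdeg J' = mdeg J \<and> lookup J 0 < lookup J' 0"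
proof -
  let ?K = "J + Poly_Mapping.single 0 (n - r)"
  have le: "mindex_le J' ?K" and "mdeg J \<le> mdeg J'"
    using assms(1-3) by (auto simp: Kcoeff_neq_0_iff mdeg_add)
  moreover have "lookup J 0 < lookup J' 0" if "mdeg J' = mdeg J"
  proof (rule ccontr)
    assume "\<not> lookup J 0 < lookup J' 0"
    then have "lookup J' i \<le> lookup J i" for i
      using le by (cases "i = 0") (auto simp: mindex_le_def lookup_add lookup_single dest: spec[of _ i])
    then have "mindex_le J' J"
      by (simp add: mindex_le_def)
    then show False
      using mdeg_strict_mono that assms(4) by fastforce
  qed
  ultimately show ?thesis
    by (cases "mdeg J' = mdeg J") auto
qed

lemma lookup_op_comb_Kop_shift:
  fixes e :: mindex
  assumes "0 < N" "r \<le> n" "J \<in> MI N r" "r - m < mdeg M"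
    and higher: "\<And>J'. J' \<in> MI N r \<Longrightarrow> mdeg J < mdeg J' \<or> mdeg J' = mdeg J \<and> lookup J 0 < lookup J' 0
      \<Longrightarrow> p J' \<in> Pspace N (r - m)"
  defines "e \<equiv> Poly_Mapping.single 0 (n - r)"
  shows "lookup (op_comb N r (Kop N n r) p (xmon (J + e))) (M + e) = Kcoeff n r (J + e) J * lookup (p J) M"
proof -
  interpret K: triangular_family N r "Kop N n r" "Kcoeff n r"
    using assms(2) by (rule triangular_family_Kop)
  let ?K = "J + e" and ?u = "\<lambda>J'. Kcoeff n r (J + e) J' * lookup (p J' * xmon (J + e - J')) (M + e)"
  have "keys e \<subseteq> {..<N}"
    using assms(1) by (simp add: e_def)
  then have keys_K: "keys ?K \<subseteq> {..<N}"
    using assms(3) keys_add[of J e] unfolding MI_def by blast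
  have mdeg_K: "mdeg ?K = mdeg J + (n - r)"
    by (simp add: e_def mdeg_add)
  have "?u J' = 0" if J': "J' \<in> MI N r" "J' \<noteq> J" for J'
  proof (cases "Kcoeff n r ?K J' = 0")
    case False
    then have le: "mindex_le J' ?K" and "mdeg J \<le> mdeg J'"
      using assms(2,3) mdeg_K by (auto simp: Kcoeff_neq_0_iff MI_def)
    have "p J' \<in> Pspace N (r - m)"
      using Kcoeff_shift_neq_0_above[of r n J J'] False J'(2) assms(2,3) higher[OF J'(1)]
      by (simp add: MI_def e_def)
    moreover have "r - m + mdeg (?K - J') < mdeg (M + e)"
      using assms(4) mdeg_split[OF le] mdeg_K \<open>mdeg J \<le> mdeg J'\<close> by (simp add: mdeg_add e_def)
    ultimately show ?thesis
      by (simp add: lookup_mult_xmon_eq_0)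
  qed simp
  then have "(\<Sum>J'\<in>MI N r. ?u J') = ?u J"
    using sum.remove[OF finite_MI assms(3), of ?u] sum.neutral[of "MI N r - {J}" ?u] by simp
  moreover have "lookup (op_comb N r (Kop N n r) p (xmon ?K)) (M + e) = (\<Sum>J'\<in>MI N r. ?u J')"
    by (simp add: K.op_comb_xmon[OF keys_K] lookup_sum)
  moreover have "?u J = Kcoeff n r ?K J * lookup (p J) M"
    by (simp add: lookup_mult_xmon add.commute[of M])
  ultimately show ?thesis
    by simp
qed

lemma Kop_coeff_degree_bound_step:
  assumes "0 < N" "m \<le> r" "r \<le> n" "\<And>J. p J \<in> polys N"
    and maps: "\<And>q. q \<in> Pspace N n \<Longrightarrow> op_comb N r (Kop N n r) p q \<in> Pspace N (n - m)"
    and J: "J \<in> MI N r"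
    and higher: "\<And>J'. J' \<in> MI N r \<Longrightarrow> mdeg J < mdeg J' \<or> mdeg J' = mdeg J \<and> lookup J 0 < lookup J' 0
      \<Longrightarrow> p J' \<in> Pspace N (r - m)"
  shows "p J \<in> Pspace N (r - m)"
  unfolding Pspace_eq mem_Collect_eq
proof (rule subsetI, rule ccontr)
  fix M
  assume M: "M \<in> keys (p J)" "M \<notin> MI N (r - m)"
  then have mdeg_M: "r - m < mdeg M"
    using assms(4)[of J] by (auto simp: polys_def MI_def)
  define e where "e = Poly_Mapping.single (0::nat) (n - r)"
  have "J + e \<in> MI N (r + (n - r))"
    using J assms(1) by (intro MI_add) (simp_all add: e_def MI_def)
  then have "op_comb N r (Kop N n r) p (xmon (J + e)) \<in> Pspace N (n - m)"
    using assms(3) by (intro maps) simp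
  moreover have "lookup (op_comb N r (Kop N n r) p (xmon (J + e))) (M + e) = Kcoeff n r (J + e) J * lookup (p J) M"
    unfolding e_def using J mdeg_M higher by (intro lookup_op_comb_Kop_shift[OF assms(1,3)]) simp_all
  moreover have "Kcoeff n r (J + e) J \<noteq> 0"
    using J assms(3) by (simp add: Kcoeff_neq_0_iff MI_def e_def mdeg_add)
  ultimately have "M + e \<in> MI N (n - m)"
    using M(1) by (auto simp: Pspace_eq in_keys_iff)
  then have "mdeg M + (n - r) \<le> n - m"
    by (simp add: MI_def mdeg_add e_def)
  then show False
    using mdeg_M assms(2,3) by linarith
qed

lemma Kop_coeff_degree_bound:
  assumes "0 < N" "m \<le> r" "r \<le> n" "\<And>J. p J \<in> polys N"
    and maps: "\<And>q. q \<in> Pspace N n \<Longrightarrow> op_comb N r (Kop N n r) p q \<in> Pspace N (n - m)"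
  shows "J \<in> MI N r \<Longrightarrow> p J \<in> Pspace N (r - m)"
proof (induction J rule: measure_induct_rule[where f = "\<lambda>J. (r + 1) * (r + 1) - ((r + 1) * mdeg J + lookup J 0)"])
  \<comment> \<open>downward induction along the lexicographic order of \<open>(mdeg J, lookup J 0)\<close>\<close>
  case (less J)
  show ?case
  proof (rule Kop_coeff_degree_bound_step[OF assms(1-3)])
    fix J'
    assume J': "J' \<in> MI N r" "mdeg J < mdeg J' \<or> mdeg J' = mdeg J \<and> lookup J 0 < lookup J' 0"
    have "(r + 1) * mdeg J + lookup J 0 < (r + 1) * mdeg J' + lookup J' 0"
    proof (cases "mdeg J < mdeg J'")
      case True
      then have "(r + 1) * (mdeg J + 1) \<le> (r + 1) * mdeg J'"
        by (intro mult_le_mono2) simp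
      moreover have "lookup J 0 \<le> r"
        using less.prems lookup_le_mdeg[of J 0] by (simp add: MI_def)
      ultimately show ?thesis
        by simp
    qed (use J'(2) in simp)
    moreover have "(r + 1) * mdeg J' + lookup J' 0 < (r + 1) * (r + 1)"
      using J'(1) lookup_le_mdeg[of J' 0] mult_le_mono2[of "mdeg J'" r "r + 1"] by (simp add: MI_def)
    ultimately show "p J' \<in> Pspace N (r - m)"
      using J'(1) by (intro less.IH diff_less_mono2) simp_all
  qed (use less.prems assms(4) maps in simp_all)
qed

section \<open>The space \<open>Lspace N n r m\<close> and its dimension\<close>

lemma Lspace_iff: "L \<in> Lspace N n r m \<longleftrightarrow> is_diffop N r L \<and> (\<forall>q\<in>Pspace N n. L q \<in> Pspace N (n - m))"
  by (simp add: Lspace_def is_diffop_def)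

lemma op_comb_Kop_in_Lspace:
  assumes "m \<le> r" "r \<le> n" "\<And>J. J \<in> MI N r \<Longrightarrow> p J \<in> Pspace N (r - m)"
  shows "op_comb N r (Kop N n r) p \<in> Lspace N n r m"
  unfolding Lspace_iff
proof
  show "is_diffop N r (op_comb N r (Kop N n r) p)"
    using assms(3) Pspace_subset_polys by (intro is_diffop_op_comb_Kop) blast
  show "\<forall>q\<in>Pspace N n. op_comb N r (Kop N n r) p q \<in> Pspace N (n - m)"
  proof
    fix q
    assume "q \<in> Pspace N n"
    with assms show "op_comb N r (Kop N n r) p q \<in> Pspace N (n - m)"
      by (rule op_comb_Kop_maps_Pspace)
  qed
qed

lemma Lspace_Kop_expansion:
  assumes "0 < N" "m \<le> r" "r \<le> n" "L \<in> Lspace N n r m"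
  shows "\<exists>p. (\<forall>J. p J \<in> (if J \<in> MI N r then Pspace N (r - m) else {0})) \<and> L = op_comb N r (Kop N n r) p"
proof -
  have "is_diffop N r L"
    using assms(4) by (simp add: Lspace_iff)
  then obtain p where p: "\<forall>J. p J \<in> polys N" "\<forall>J. J \<notin> MI N r \<longrightarrow> p J = 0" "L = op_comb N r (Kop N n r) p"
    using Kop_expansion_exists[OF assms(3)] by blast
  have maps: "op_comb N r (Kop N n r) p q \<in> Pspace N (n - m)" if "q \<in> Pspace N n" for q
    using assms(4) p(3) that by (simp add: Lspace_iff)
  have "p J \<in> Pspace N (r - m)" if "J \<in> MI N r" for J
    using p(1) maps that by (intro Kop_coeff_degree_bound[OF assms(1-3)]) simp_all
  then show ?thesis
    using p(2,3) by auto
qed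

interpretation ops: vector_space op_scale
  by unfold_locales (auto simp: op_scale_def fun_eq_iff cpoly_add cpoly_mult algebra_simps)

definition Kbasis :: "nat \<Rightarrow> nat \<Rightarrow> nat \<Rightarrow> mindex \<times> mindex \<Rightarrow> mpoly \<Rightarrow> mpoly" where
  "Kbasis N n r JM = (\<lambda>q. xmon (snd JM) * Kop N n r (fst JM) q)"

lemma sum_apply: "(\<Sum>x\<in>A. f x) q = (\<Sum>x\<in>A. f x q)"
  by (induction A rule: infinite_finite_induct) auto

lemma sum_scale_Kbasis:
  "(\<Sum>x\<in>MI N r \<times> MI N t. op_scale (c x) (Kbasis N n r x))
    = op_comb N r (Kop N n r) (\<lambda>J. \<Sum>M\<in>MI N t. cpoly (c (J, M)) * xmon M)"
proof
  fix q
  have "(\<Sum>x\<in>MI N r \<times> MI N t. op_scale (c x) (Kbasis N n r x)) q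
      = (\<Sum>J\<in>MI N r. \<Sum>M\<in>MI N t. cpoly (c (J, M)) * xmon M * Kop N n r J q)"
    by (simp add: sum_apply op_scale_def Kbasis_def sum.cartesian_product split_def mult.assoc)
  then show "(\<Sum>x\<in>MI N r \<times> MI N t. op_scale (c x) (Kbasis N n r x)) q
      = op_comb N r (Kop N n r) (\<lambda>J. \<Sum>M\<in>MI N t. cpoly (c (J, M)) * xmon M) q"
    by (simp add: op_comb_def sum_distrib_right)
qed

lemma Kbasis_independent_family:
  assumes "r \<le> n" "(\<Sum>x\<in>MI N r \<times> MI N t. op_scale (c x) (Kbasis N n r x)) = 0" "x \<in> MI N r \<times> MI N t"
  shows "c x = 0"
proof -
  obtain J M where x: "x = (J, M)" "J \<in> MI N r" "M \<in> MI N t"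
    using assms(3) by blast
  have "op_comb N r (Kop N n r) (\<lambda>J. \<Sum>M\<in>MI N t. cpoly (c (J, M)) * xmon M)
      = (\<Sum>x\<in>MI N r \<times> MI N t. op_scale (c x) (Kbasis N n r x))"
    by (rule sum_scale_Kbasis[symmetric])
  also have "\<dots> = op_comb N r (Kop N n r) (\<lambda>J. 0)"
    using assms(2) by (simp add: op_comb_def fun_eq_iff)
  finally have "op_comb N r (Kop N n r) (\<lambda>J. \<Sum>M\<in>MI N t. cpoly (c (J, M)) * xmon M)
      = op_comb N r (Kop N n r) (\<lambda>J. 0)" .
  then have "(\<Sum>M\<in>MI N t. cpoly (c (J, M)) * xmon M) = 0"
    using Kop_expansion_unique[OF assms(1) _ x(2)] by blast
  then show ?thesis
    using lookup_sum_cpoly_xmon[OF finite_MI x(3), of "\<lambda>M. c (J, M)"] x(1) by simp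
qed

lemma Kbasis_eq_op_comb:
  assumes "J \<in> MI N r"
  shows "Kbasis N n r (J, M) = op_comb N r (Kop N n r) (\<lambda>J'. if J' = J then xmon M else 0)"
proof
  fix q
  have "op_comb N r (Kop N n r) (\<lambda>J'. if J' = J then xmon M else 0) q
      = (\<Sum>J'\<in>MI N r. if J' = J then xmon M * Kop N n r J q else 0)"
    unfolding op_comb_def by (rule sum.cong) auto
  also have "\<dots> = Kbasis N n r (J, M) q"
    using assms finite_MI[of N r] by (simp add: Kbasis_def)
  finally show "Kbasis N n r (J, M) q = op_comb N r (Kop N n r) (\<lambda>J'. if J' = J then xmon M else 0) q"
    by simp
qed

lemma inj_on_Kbasis:
  assumes "r \<le> n"
  shows "inj_on (Kbasis N n r) (MI N r \<times> MI N t)"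
proof (rule inj_onI)
  fix x y
  assume xy: "x \<in> MI N r \<times> MI N t" "y \<in> MI N r \<times> MI N t" "Kbasis N n r x = Kbasis N n r y"
  obtain J M J' M' where x: "x = (J, M)" "J \<in> MI N r" and y: "y = (J', M')" "J' \<in> MI N r"
    using xy(1,2) by blast
  have "op_comb N r (Kop N n r) (\<lambda>K. if K = J then xmon M else 0)
      = op_comb N r (Kop N n r) (\<lambda>K. if K = J' then xmon M' else 0)"
    using xy(3) x y by (simp add: Kbasis_eq_op_comb)
  then have "(\<lambda>K. if K = J then xmon M else 0) J = (\<lambda>K. if K = J' then xmon M' else 0) J"
    by (rule Kop_expansion_unique[OF assms _ x(2)])
  then have "xmon M = (if J = J' then xmon M' else 0)"
    by simp
  then show "x = y"
    using x y by (simp split: if_splits)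
qed

lemma Kbasis_subset_Lspace:
  assumes "m \<le> r" "r \<le> n"
  shows "Kbasis N n r ` (MI N r \<times> MI N (r - m)) \<subseteq> Lspace N n r m"
proof
  fix b
  assume "b \<in> Kbasis N n r ` (MI N r \<times> MI N (r - m))"
  then obtain J M where JM: "J \<in> MI N r" "M \<in> MI N (r - m)" "b = Kbasis N n r (J, M)"
    by blast
  have "b = op_comb N r (Kop N n r) (\<lambda>J'. if J' = J then xmon M else 0)"
    using JM by (simp add: Kbasis_eq_op_comb)
  also have "\<dots> \<in> Lspace N n r m"
    using JM(2) by (intro op_comb_Kop_in_Lspace[OF assms]) (simp add: mpoly.subspace_0[OF subspace_Pspace])
  finally show "b \<in> Lspace N n r m" .
qed

lemma Lspace_subset_span_Kbasis:
  assumes "0 < N" "m \<le> r" "r \<le> n"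
  shows "Lspace N n r m \<subseteq> ops.span (Kbasis N n r ` (MI N r \<times> MI N (r - m)))"
proof
  let ?A = "MI N r \<times> MI N (r - m)"
  fix L
  assume "L \<in> Lspace N n r m"
  then obtain p where p: "\<forall>J. p J \<in> (if J \<in> MI N r then Pspace N (r - m) else {0})"
    "L = op_comb N r (Kop N n r) p"
    using Lspace_Kop_expansion[OF assms] by blast
  have "p J = (\<Sum>M\<in>MI N (r - m). cpoly (lookup (p J) M) * xmon M)" if "J \<in> MI N r" for J
    using p(1) that by (intro mpoly_expansion finite_MI) (auto simp: Pspace_eq split: if_splits dest: spec[of _ J])
  then have "L = (\<Sum>x\<in>?A. op_scale (lookup (p (fst x)) (snd x)) (Kbasis N n r x))"
    unfolding p(2) sum_scale_Kbasis by (simp add: op_comb_def)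
  also have "\<dots> \<in> ops.span (Kbasis N n r ` ?A)"
  proof (rule ops.span_sum)
    fix x
    assume "x \<in> ?A"
    then have "Kbasis N n r x \<in> ops.span (Kbasis N n r ` ?A)"
      by (intro ops.span_base imageI)
    then show "op_scale (lookup (p (fst x)) (snd x)) (Kbasis N n r x) \<in> ops.span (Kbasis N n r ` ?A)"
      by (rule ops.span_scale)
  qed
  finally show "L \<in> ops.span (Kbasis N n r ` ?A)" .
qed

lemma independent_Kbasis:
  assumes "r \<le> n"
  shows "ops.independent (Kbasis N n r ` (MI N r \<times> MI N t))"
proof
  let ?A = "MI N r \<times> MI N t"
  assume "ops.dependent (Kbasis N n r ` ?A)"
  then obtain u b where b: "b \<in> Kbasis N n r ` ?A" "u b \<noteq> 0"
    and sum_0: "(\<Sum>v\<in>Kbasis N n r ` ?A. op_scale (u v) v) = 0"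
    unfolding ops.dependent_finite[OF finite_imageI[OF finite_cartesian_product[OF finite_MI finite_MI]]]
    by blast
  then obtain x where x: "x \<in> ?A" "b = Kbasis N n r x"
    by blast
  have "(\<Sum>x\<in>?A. op_scale (u (Kbasis N n r x)) (Kbasis N n r x)) = 0"
    using sum_0 by (simp add: sum.reindex[OF inj_on_Kbasis[OF assms]])
  then have "u (Kbasis N n r x) = 0"
    by (rule Kbasis_independent_family[where c = "\<lambda>y. u (Kbasis N n r y)", OF assms _ x(1)])
  with b(2) x(2) show False
    by simp
qed

lemma dim_Lspace:
  assumes "0 < N" "m \<le> r" "r \<le> n"
  shows "ops.dim (Lspace N n r m) = card (MI N r) * card (MI N (r - m))"
proof (rule ops.dim_unique)
  show "Kbasis N n r ` (MI N r \<times> MI N (r - m)) \<subseteq> Lspace N n r m"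
    using assms(2,3) by (rule Kbasis_subset_Lspace)
  show "Lspace N n r m \<subseteq> ops.span (Kbasis N n r ` (MI N r \<times> MI N (r - m)))"
    using assms by (rule Lspace_subset_span_Kbasis)
  show "ops.independent (Kbasis N n r ` (MI N r \<times> MI N (r - m)))"
    using assms(3) by (rule independent_Kbasis)
  show "card (Kbasis N n r ` (MI N r \<times> MI N (r - m))) = card (MI N r) * card (MI N (r - m))"
    by (simp add: card_image[OF inj_on_Kbasis[OF assms(3)]] card_cartesian_product)
qed

theorem mainTheorem19:
  fixes N n r m :: nat
  assumes "N \<ge> 1" and "m \<le> r" and "r \<le> n"
  shows "(\<forall>L\<in>Lspace N n r m. \<exists>!p. (\<forall>J. p J \<in> (if J \<in> MI N r then Pspace N (r - m) else {0}))
             \<and> L = (\<lambda>q. \<Sum>J\<in>MI N r. p J * Kop N n r J q))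
       \<and> (\<forall>p. (\<forall>J\<in>MI N r. p J \<in> Pspace N (r - m))
             \<longrightarrow> (\<lambda>q. \<Sum>J\<in>MI N r. p J * Kop N n r J q) \<in> Lspace N n r m)
       \<and> vector_space.dim op_scale (Lspace N n r m)
           = ((N + r - m) choose (r - m)) * ((N + r) choose r)"
proof (intro conjI ballI allI impI)
  have "0 < N"
    using assms(1) by simp
  fix L
  assume "L \<in> Lspace N n r m"
  then obtain p where p: "\<forall>J. p J \<in> (if J \<in> MI N r then Pspace N (r - m) else {0})"
    "L = op_comb N r (Kop N n r) p"
    using Lspace_Kop_expansion[OF \<open>0 < N\<close> assms(2,3)] by blast
  moreover have "p' = p" if "\<forall>J. p' J \<in> (if J \<in> MI N r then Pspace N (r - m) else {0})"
    "L = op_comb N r (Kop N n r) p'" for p'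
  proof (rule Kop_expansion_inj[OF assms(3)])
    show "\<forall>J. J \<notin> MI N r \<longrightarrow> p' J = 0" "\<forall>J. J \<notin> MI N r \<longrightarrow> p J = 0"
      using that(1) p(1) by (metis empty_iff insert_iff)+
    show "op_comb N r (Kop N n r) p' = op_comb N r (Kop N n r) p"
      using that(2) p(2) by simp
  qed
  ultimately show "\<exists>!p. (\<forall>J. p J \<in> (if J \<in> MI N r then Pspace N (r - m) else {0}))
      \<and> L = (\<lambda>q. \<Sum>J\<in>MI N r. p J * Kop N n r J q)"
    unfolding op_comb_def by blast
next
  fix p
  assume "\<forall>J\<in>MI N r. p J \<in> Pspace N (r - m)"
  then show "(\<lambda>q. \<Sum>J\<in>MI N r. p J * Kop N n r J q) \<in> Lspace N n r m"
    using op_comb_Kop_in_Lspace[OF assms(2,3)] unfolding op_comb_def by blast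
next
  show "vector_space.dim op_scale (Lspace N n r m) = ((N + r - m) choose (r - m)) * ((N + r) choose r)"
    using dim_Lspace[of N m r n] assms by (simp add: card_MI mult.commute)
qed

end
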